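(* Let $\mu\in(0,1)$, $a>0$, and let $f$ satisfy $(f_1)$–$(f_3)$ as in the context. Then for every fixed integer $n\ge2$, $\max_{t\ge0}\Phi_n(t)>0$ and this maximum is attained at some $t_n>0$.
   Context: $I_\mu(x)=|x|^{-\mu}$; $f\in C(\mathbb{R},\mathbb{R})$, $F(t)=\int_0^tf(s)ds$; $\|(-\Delta)^{1/4}u\|_2^2=\frac1{2\pi}\int\int\frac{|u(x)-u(y)|^2}{|x-y|^2}dxdy$; $J(u)=\frac12\|(-\Delta)^{1/4}u\|_2^2-\frac12\int(I_\mu*F(u))F(u)dx$ on $H^{1/2}(\mathbb{R})$. For $n\ge2$ let $\varpi_n(x)=\frac{1}{\sqrt\pi}\sqrt{\log n}$ for $|x|<1/n$, $\varpi_n(x)=\frac{1}{\sqrt\pi}\frac{\log(1/|x|)}{\sqrt{\log n}}$ for $1/n\le|x|\le1$, $\varpi_n(x)=0$ for $|x|>1$, and $\omega_n=a\varpi_n/\|\varpi_n\|_2$. Define $\Phi_n(t)=J(t\,\omega_n(t^2\cdot))=\frac{t^2}{2}\|(-\Delta)^{1/4}\omega_n\|_2^2-\frac12t^{2(\mu-2)}\int(I_\mu*F(t\omega_n))F(t\omega_n)dx$ for $t>0$, and $\Phi_n(0)=J(0)=0$. Conditions: $(f_1)$ $\lim_{t\to0}|f(t)|/|t|^\kappa=0$ for some $\kappa>2-\mu$; $(f_2)$ $\lim_{|t|\to\infty}|f(t)|e^{-\alpha t^2}=0$ for $\alpha>\pi$ and $=+\infty$ for $0<\alpha<\pi$; $(f_3)$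 there is $\theta>3-\mu$ with $0<\theta F(t)\le tf(t)$ for $t\ne0$. *)

theory Defs
  imports "HOL-Analysis.Analysis"
begin

definition prim :: "(real \<Rightarrow> real) \<Rightarrow> real \<Rightarrow> real" where
  "prim f t = (if 0 \<le> t then integral {0..t} f else - integral {t..0} f)"

definition frac_seminorm_sq :: "(real \<Rightarrow> real) \<Rightarrow> real" where
  "frac_seminorm_sq u =
     (1 / (2 * pi)) * (LINT x|lborel. (LINT y|lborel. (u x - u y)^2 / (x - y)^2))"

definition choquard :: "(real \<Rightarrow> real) \<Rightarrow> real \<Rightarrow> (real \<Rightarrow> real) \<Rightarrow> real" where
  "choquard f \<mu> u =
     (LINT x|lborel. (LINT y|lborel. \<bar>x - y\<bar> powr (-\<mu>) * prim f (u y)) * prim f (u x))"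

definition varpi :: "nat \<Rightarrow> real \<Rightarrow> real" where
  "varpi n x =
     (if \<bar>x\<bar> < 1 / real n then (1 / sqrt pi) * sqrt (ln (real n))
      else if \<bar>x\<bar> \<le> 1 then (1 / sqrt pi) * ln (1 / \<bar>x\<bar>) / sqrt (ln (real n))
      else 0)"

definition L2norm :: "(real \<Rightarrow> real) \<Rightarrow> real" where
  "L2norm u = sqrt (LINT x|lborel. (u x)^2)"

definition omega :: "real \<Rightarrow> nat \<Rightarrow> real \<Rightarrow> real" where
  "omega a n x = a * varpi n x / L2norm (varpi n)"

definition Phi :: "(real \<Rightarrow> real) \<Rightarrow> real \<Rightarrow> real \<Rightarrow> nat \<Rightarrow> real \<Rightarrow> real" where
  "Phi f \<mu> a n t =
     (if t = 0 then 0
      else t^2 / 2 * frac_seminorm_sq (omega a n)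
           - 1/2 * t powr (2 * (\<mu> - 2)) * choquard f \<mu> (\<lambda>x. t * omega a n x))"

end

theory Submission
  imports Defs "HOL-Real_Asymp.Multiseries_Expansion"
begin

(* For t > 0, Phi(t) = t^2 (A/2 - t^(2 mu - 6) C(t) / 2), where A > 0 is the Gagliardo seminorm of
   omega_n and C(t) is the Choquard energy of F(t omega_n); the Riesz kernel is locally integrable
   since mu < 1, so C(t) <= const * F(t max omega_n)^2.  Near 0, (f_1) gives F(s) <= s^(kappa+1) with
   kappa > 2 - mu, hence t^(2 mu - 6) C(t) -> 0: Phi is positive for small t and Phi(t) -> 0.
   The Ambrosetti-Rabinowitz condition (f_3) gives F(s) >= F(1) s^theta for s >= 1 with
   theta > 3 - mu; since omega_n is constant near 0, C(t) grows at least like t^(2 theta), so Phi is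
   negative for large t.  Dominated convergence makes Phi continuous on [0, oo), so it attains a
   positive maximum, necessarily at some t_n > 0. *)

section \<open>Integrable kernels on the real line\<close>

lemma has_bochner_integral_lborel_nonneg:
  fixes f :: "'a::euclidean_space \<Rightarrow> real"
  assumes "f \<in> borel_measurable borel" "\<And>x. 0 \<le> f x" "(f has_integral I) UNIV"
  shows "has_bochner_integral lborel f I"
  using assms has_integral_nonneg[OF assms(3)]
  by (intro has_bochner_integral_nn_integral nn_integral_has_integral_lborel) auto

lemma has_bochner_integral_local_riesz_kernel:
  fixes \<mu> :: real
  assumes "\<mu> < 1"
  shows "has_bochner_integral lborel (\<lambda>s. indicator {-1..1} s * \<bar>s\<bar> powr (-\<mu>)) (2 / (1 - \<mu>))"
proof -
  have right: "((\<lambda>s. \<bar>s\<bar> powr (-\<mu>)) has_integral 1 / (1 - \<mu>)) {0..1}"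
    using has_integral_powr_from_0[of "-\<mu>" 1] assms
    by (subst has_integral_cong[where g="\<lambda>s. s powr (-\<mu>)"]) auto
  then have left: "((\<lambda>s. \<bar>s\<bar> powr (-\<mu>)) has_integral 1 / (1 - \<mu>)) {-1..0}"
    by (subst has_integral_reflect_real[symmetric]) simp
  have "((\<lambda>s. \<bar>s\<bar> powr (-\<mu>)) has_integral 2 / (1 - \<mu>)) {-1..1}"
    using has_integral_combine[OF _ _ left right] by simp
  moreover have eq: "(\<lambda>s. indicator {-1..1} s * \<bar>s\<bar> powr (-\<mu>)) = (\<lambda>s. if s \<in> {-1..1} then \<bar>s\<bar> powr (-\<mu>) else 0)"
    by (simp add: fun_eq_iff)
  ultimately have "((\<lambda>s. indicator {-1..1} s * \<bar>s\<bar> powr (-\<mu>)) has_integral 2 / (1 - \<mu>)) UNIV"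
    by (simp only: eq has_integral_restrict_UNIV)
  then show ?thesis
    using assms by (intro has_bochner_integral_lborel_nonneg) auto
qed

(* min 1 (1 / s^2), written so that the value at 0 is not the junk value 1 / 0 = 0 *)
definition inverse_square_weight :: "real \<Rightarrow> real" where
  "inverse_square_weight s = 1 / max 1 (s\<^sup>2)"

lemma borel_measurable_inverse_square_weight [measurable]:
  "inverse_square_weight \<in> borel_measurable borel"
  unfolding inverse_square_weight_def[abs_def] by measurable

lemma inverse_square_weight_pos: "0 < inverse_square_weight s"
  by (simp add: inverse_square_weight_def)

lemma inverse_square_weight_near: "\<bar>s\<bar> \<le> 1 \<Longrightarrow> inverse_square_weight s = 1"
  by (simp add: inverse_square_weight_def abs_square_le_1)

lemma inverse_square_weight_far: "1 \<le> \<bar>s\<bar> \<Longrightarrow> inverse_square_weight s = 1 / s\<^sup>2"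
  using one_le_power[of "\<bar>s\<bar>" 2] by (simp add: inverse_square_weight_def max_def)

lemma inverse_square_weight_ge: "\<bar>s\<bar> \<le> 2 \<Longrightarrow> 1 / 4 \<le> inverse_square_weight s"
  using power_mono[of "\<bar>s\<bar>" 2 2] by (simp add: inverse_square_weight_def)

lemma integrable_inverse_square_weight: "integrable lborel inverse_square_weight"
proof -
  have "((\<lambda>s::real. s powr -2) has_integral 1) {1..}"
    using has_integral_powr_to_inf[of "-2" 1] by simp
  moreover have eq: "(\<lambda>s::real. indicator {1..} s * s powr -2) = (\<lambda>s. if s \<in> {1..} then s powr -2 else 0)"
    by (simp add: fun_eq_iff)
  ultimately have "((\<lambda>s::real. indicator {1..} s * s powr -2) has_integral 1) UNIV"
    by (simp only: eq has_integral_restrict_UNIV)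
  then have "has_bochner_integral lborel (\<lambda>s::real. indicator {1..} s * s powr -2) 1"
    by (intro has_bochner_integral_lborel_nonneg) auto
  then have right: "integrable lborel (\<lambda>s::real. indicator {1..} s * s powr -2)"
    by (simp add: has_bochner_integral_iff)
  have left: "integrable lborel (\<lambda>s::real. indicator {1..} (-s) * (-s) powr -2)"
    using lborel_integrable_real_affine[OF right, of "-1" 0] by simp
  have bound: "inverse_square_weight s \<le> indicator {-1..1} s + indicator {1..} s * s powr -2
                                    + indicator {1..} (-s) * (-s) powr -2" for s
  proof (cases "\<bar>s\<bar> \<le> 1")
    case True
    then show ?thesis by (auto simp: inverse_square_weight_near indicator_def abs_le_iff)
  next
    case False
    then have "inverse_square_weight s = \<bar>s\<bar> powr -2"
      by (simp add: inverse_square_weight_far powr_minus powr_realpow divide_inverse)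
    then show ?thesis using False by (auto simp: indicator_def abs_if)
  qed
  have "integrable lborel (\<lambda>s::real. indicator {-1..1} s + indicator {1..} s * s powr -2
                                    + indicator {1..} (-s) * (-s) powr -2)"
    using right left by (intro Bochner_Integration.integrable_add) auto
  then show ?thesis
    by (rule Bochner_Integration.integrable_bound)
       (auto intro!: order_trans[OF bound abs_ge_self] bound simp: abs_of_pos inverse_square_weight_pos)
qed

lemma has_bochner_integral_lborel_translate:
  fixes f :: "real \<Rightarrow> 'a::{banach, second_countable_topology}"
  assumes "has_bochner_integral lborel f I"
  shows "has_bochner_integral lborel (\<lambda>y. f (y - x)) I"
  using assms lborel_integrable_real_affine[of f 1 "-x"] lborel_integral_real_affine[of 1 f "-x"]
  by (simp add: has_bochner_integral_iff)

section \<open>Riesz energy of bounded densities with finite-measure support\<close>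

definition riesz_potential :: "real \<Rightarrow> (real \<Rightarrow> real) \<Rightarrow> real \<Rightarrow> real" where
  "riesz_potential \<mu> G x = (LINT y|lborel. \<bar>x - y\<bar> powr (-\<mu>) * G y)"

definition riesz_energy :: "real \<Rightarrow> (real \<Rightarrow> real) \<Rightarrow> real" where
  "riesz_energy \<mu> G = (LINT x|lborel. riesz_potential \<mu> G x * G x)"

lemma choquard_eq_riesz_energy: "choquard f \<mu> u = riesz_energy \<mu> (\<lambda>y. prim f (u y))"
  by (simp add: choquard_def riesz_energy_def riesz_potential_def)

locale riesz_density =
  fixes \<mu> :: real and S :: "real set" and B :: real and G :: "real \<Rightarrow> real"
  assumes exponent: "0 \<le> \<mu>" "\<mu> < 1"
    and measurable_density [measurable]: "G \<in> borel_measurable borel"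
    and nonneg: "0 \<le> G y"
    and le_indicator: "G y \<le> B * indicator S y"
    and bound_nonneg: "0 \<le> B"
    and sets_support [measurable]: "S \<in> sets borel"
    and finite_support: "emeasure lborel S < \<infinity>"
begin

lemma riesz_integrand_le:
  "\<bar>x - y\<bar> powr (-\<mu>) * G y \<le> B * (indicator {-1..1} (y - x) * \<bar>y - x\<bar> powr (-\<mu>) + indicator S y)"
proof (cases "\<bar>y - x\<bar> \<le> 1")
  case True
  have "\<bar>x - y\<bar> powr (-\<mu>) * G y \<le> \<bar>y - x\<bar> powr (-\<mu>) * (B * indicator S y)"
    unfolding abs_minus_commute[of x y] by (intro mult_left_mono le_indicator) simp
  also have "\<dots> \<le> B * (\<bar>y - x\<bar> powr (-\<mu>) + indicator S y)"
    using bound_nonneg by (simp add: algebra_simps indicator_def)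
  finally show ?thesis using True by (simp add: abs_le_iff)
next
  case False
  have "\<bar>x - y\<bar> powr (-\<mu>) \<le> 1"
    using False exponent by (simp add: powr_minus inverse_le_1_iff ge_one_powr_ge_zero)
  then have "\<bar>x - y\<bar> powr (-\<mu>) * G y \<le> G y"
    using nonneg by (simp add: mult_left_le_one_le)
  also have "\<dots> \<le> B * indicator S y" by (rule le_indicator)
  moreover have "y - x \<notin> {-1..1}" using False by auto
  ultimately show ?thesis by simp
qed

lemma has_bochner_integral_riesz_dominant:
  "has_bochner_integral lborel (\<lambda>y. B * (indicator {-1..1} (y - x) * \<bar>y - x\<bar> powr (-\<mu>) + indicator S y))
     (B * (2 / (1 - \<mu>) + measure lborel S))"
  using has_bochner_integral_lborel_translate[OF has_bochner_integral_local_riesz_kernel[OF exponent(2)]]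
    finite_support
  by (intro has_bochner_integral_mult_right has_bochner_integral_add)
     (auto simp: has_bochner_integral_iff)

lemma integrable_riesz_integrand: "integrable lborel (\<lambda>y. \<bar>x - y\<bar> powr (-\<mu>) * G y)"
  by (rule Bochner_Integration.integrable_bound[OF
        has_bochner_integral_riesz_dominant[THEN integrable.intros]])
     (use riesz_integrand_le nonneg in \<open>auto intro: order_trans[OF _ abs_ge_self]\<close>)

lemma riesz_potential_nonneg: "0 \<le> riesz_potential \<mu> G x"
  unfolding riesz_potential_def using nonneg by (simp add: integral_nonneg_AE)

lemma riesz_potential_le: "riesz_potential \<mu> G x \<le> B * (2 / (1 - \<mu>) + measure lborel S)"
proof -
  have "riesz_potential \<mu> G x
      \<le> (LINT y|lborel. B * (indicator {-1..1} (y - x) * \<bar>y - x\<bar> powr (-\<mu>) + indicator S y))"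
    unfolding riesz_potential_def
    by (rule integral_mono[OF integrable_riesz_integrand
          has_bochner_integral_riesz_dominant[THEN integrable.intros] riesz_integrand_le])
  then show ?thesis
    by (simp only: has_bochner_integral_riesz_dominant[THEN has_bochner_integral_integral_eq])
qed

lemma riesz_energy_integrand_le:
  "riesz_potential \<mu> G x * G x \<le> B\<^sup>2 * (2 / (1 - \<mu>) + measure lborel S) * indicator S x"
proof -
  have "riesz_potential \<mu> G x * G x \<le> (B * (2 / (1 - \<mu>) + measure lborel S)) * (B * indicator S x)"
    using bound_nonneg exponent nonneg
    by (intro mult_mono riesz_potential_le le_indicator riesz_potential_nonneg) auto
  then show ?thesis by (simp add: power2_eq_square mult_ac)
qed

lemma integrable_riesz_energy_integrand: "integrable lborel (\<lambda>x. riesz_potential \<mu> G x * G x)"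
proof (rule Bochner_Integration.integrable_bound)
  show "integrable lborel (\<lambda>x. B\<^sup>2 * (2 / (1 - \<mu>) + measure lborel S) * indicator S x)"
    using finite_support by simp
  show "(\<lambda>x. riesz_potential \<mu> G x * G x) \<in> borel_measurable lborel"
    unfolding riesz_potential_def by measurable
qed (use riesz_energy_integrand_le riesz_potential_nonneg nonneg
      in \<open>auto intro: order_trans[OF _ abs_ge_self]\<close>)

lemma riesz_energy_nonneg: "0 \<le> riesz_energy \<mu> G"
  unfolding riesz_energy_def
  using riesz_potential_nonneg nonneg by (simp add: integral_nonneg_AE)

lemma riesz_energy_le: "riesz_energy \<mu> G \<le> B\<^sup>2 * (2 / (1 - \<mu>) + measure lborel S) * measure lborel S"
proof -
  have "riesz_energy \<mu> G \<le> (LINT x|lborel. B\<^sup>2 * (2 / (1 - \<mu>) + measure lborel S) * indicator S x)"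
    unfolding riesz_energy_def
    by (rule integral_mono[OF integrable_riesz_energy_integrand _ riesz_energy_integrand_le])
       (use finite_support in simp)
  then show ?thesis using finite_support by simp
qed

lemma riesz_energy_ge:
  assumes "a < b" "0 \<le> c" and lower: "\<And>y. y \<in> {a..b} \<Longrightarrow> c \<le> G y"
  shows "c\<^sup>2 * (b - a) powr (2 - \<mu>) \<le> riesz_energy \<mu> G"
proof -
  have potential: "c * (b - a) powr (1 - \<mu>) \<le> riesz_potential \<mu> G x" if "x \<in> {a..b}" for x
  proof -
    have "c * (b - a) powr (-\<mu>) * indicator {a..b} y \<le> \<bar>x - y\<bar> powr (-\<mu>) * G y"
      if "y \<noteq> x" for y \<comment> \<open>at y = x the kernel takes the junk value 0 powr (-mu) = 0\<close>
    proof (cases "y \<in> {a..b}")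
      case True
      then have "(b - a) powr (-\<mu>) \<le> \<bar>x - y\<bar> powr (-\<mu>)"
        using \<open>x \<in> {a..b}\<close> \<open>y \<noteq> x\<close> exponent by (intro powr_mono2') auto
      then show ?thesis
        using True lower[OF True] \<open>0 \<le> c\<close> by (simp add: mult_mono mult.commute)
    qed (simp add: nonneg)
    then have "(LINT y|lborel. c * (b - a) powr (-\<mu>) * indicator {a..b} y) \<le> riesz_potential \<mu> G x"
      unfolding riesz_potential_def
      by (intro integral_mono_AE integrable_riesz_integrand)
         (auto intro: eventually_mono[OF AE_lborel_singleton[of x]] simp: emeasure_lborel_Icc_eq)
    moreover have "(b - a) * (b - a) powr (-\<mu>) = (b - a) powr (1 - \<mu>)"
      using \<open>a < b\<close> by (simp add: powr_diff powr_minus divide_inverse)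
    ultimately show ?thesis using \<open>a < b\<close> by (simp add: mult_ac)
  qed
  have "(LINT x|lborel. c * (b - a) powr (1 - \<mu>) * c * indicator {a..b} x) \<le> riesz_energy \<mu> G"
    unfolding riesz_energy_def
  proof (rule integral_mono[OF _ integrable_riesz_energy_integrand])
    fix x
    show "c * (b - a) powr (1 - \<mu>) * c * indicator {a..b} x \<le> riesz_potential \<mu> G x * G x"
      using potential[of x] lower[of x] \<open>0 \<le> c\<close> riesz_potential_nonneg[of x] nonneg[of x]
      by (cases "x \<in> {a..b}") (auto intro: mult_mono)
  qed (use \<open>a < b\<close> in simp)
  moreover have "(b - a) powr (1 - \<mu>) * (b - a) = (b - a) powr (2 - \<mu>)"
    using \<open>a < b\<close> by (simp add: powr_diff power2_eq_square)
  ultimately show ?thesis using \<open>a < b\<close> by (simp add: power2_eq_square mult_ac)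
qed

lemma riesz_energy_tendsto:
  assumes approx: "\<And>i. riesz_density \<mu> S B (Gs i)"
    and pointwise: "\<And>y. (\<lambda>i. Gs i y) \<longlonglongrightarrow> G y"
  shows "(\<lambda>i. riesz_energy \<mu> (Gs i)) \<longlonglongrightarrow> riesz_energy \<mu> G"
  unfolding riesz_energy_def
proof (rule integral_dominated_convergence)
  have [measurable]: "Gs i \<in> borel_measurable borel" for i
    using approx by (rule riesz_density.measurable_density)
  show "(\<lambda>x. riesz_potential \<mu> G x * G x) \<in> borel_measurable lborel"
    "\<And>i. (\<lambda>x. riesz_potential \<mu> (Gs i) x * Gs i x) \<in> borel_measurable lborel"
    unfolding riesz_potential_def by measurable
  show "integrable lborel (\<lambda>x. B\<^sup>2 * (2 / (1 - \<mu>) + measure lborel S) * indicator S x)"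
    using finite_support by simp
  show "AE x in lborel. norm (riesz_potential \<mu> (Gs i) x * Gs i x)
          \<le> B\<^sup>2 * (2 / (1 - \<mu>) + measure lborel S) * indicator S x" for i
    using riesz_density.riesz_energy_integrand_le[OF approx]
      riesz_density.riesz_potential_nonneg[OF approx] riesz_density.nonneg[OF approx]
    by (intro AE_I2) simp
  have "(\<lambda>i. riesz_potential \<mu> (Gs i) x) \<longlonglongrightarrow> riesz_potential \<mu> G x" for x
    unfolding riesz_potential_def
  proof (rule integral_dominated_convergence)
    show "integrable lborel (\<lambda>y. B * (indicator {-1..1} (y - x) * \<bar>y - x\<bar> powr (-\<mu>) + indicator S y))"
      using has_bochner_integral_riesz_dominant by (rule integrable.intros)
    show "AE y in lborel. norm (\<bar>x - y\<bar> powr (-\<mu>) * Gs i y)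
            \<le> B * (indicator {-1..1} (y - x) * \<bar>y - x\<bar> powr (-\<mu>) + indicator S y)" for i
      using riesz_density.riesz_integrand_le[OF approx] riesz_density.nonneg[OF approx]
      by (intro AE_I2) simp
  qed (auto intro!: tendsto_mult pointwise)
  then show "AE x in lborel. (\<lambda>i. riesz_potential \<mu> (Gs i) x * Gs i x) \<longlonglongrightarrow> riesz_potential \<mu> G x * G x"
    by (intro AE_I2 tendsto_mult pointwise)
qed

end

section \<open>The primitive F\<close>

lemma prim_0 [simp]: "prim f 0 = 0"
  by (simp add: prim_def)

lemma has_real_derivative_prim:
  assumes "continuous_on UNIV f"
  shows "(prim f has_real_derivative f t) (at t)"
proof -
  define R where "R = \<bar>t\<bar> + 1"
  have R: "0 < R" "t \<in> {-R<..<R}" by (auto simp: R_def)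
  have integrable: "f integrable_on {-R..R}"
    using assms by (intro integrable_continuous_interval) (auto intro: continuous_on_subset)
  have prim_eq: "prim f s = integral {-R..s} f - integral {-R..0} f" if "s \<in> {-R<..<R}" for s
  proof (cases "0 \<le> s")
    case True
    have "integral {-R..0} f + integral {0..s} f = integral {-R..s} f"
      using True R that by (intro Henstock_Kurzweil_Integration.integral_combine)
        (auto intro: integrable_on_subinterval[OF integrable])
    then show ?thesis using True by (simp add: prim_def)
  next
    case False
    have "integral {-R..s} f + integral {s..0} f = integral {-R..0} f"
      using False R that by (intro Henstock_Kurzweil_Integration.integral_combine)
        (auto intro: integrable_on_subinterval[OF integrable])
    then show ?thesis using False by (simp add: prim_def)
  qed
  have "((\<lambda>s. integral {-R..s} f) has_real_derivative f t) (at t within {-R..R})"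
    using assms R by (intro integral_has_real_derivative) (auto intro: continuous_on_subset)
  then have "((\<lambda>s. integral {-R..s} f - integral {-R..0} f) has_real_derivative f t) (at t)"
    using at_within_interior[of t "{-R..R}"] R by (auto intro: derivative_eq_intros)
  then show ?thesis
    by (rule has_field_derivative_transform_within_open[where S="{-R<..<R}"]) (use R prim_eq in auto)
qed

lemma continuous_on_prim: "continuous_on UNIV f \<Longrightarrow> continuous_on UNIV (prim f)"
  using has_real_derivative_prim by (meson DERIV_isCont continuous_at_imp_continuous_on)

lemma borel_measurable_prim: "continuous_on UNIV f \<Longrightarrow> prim f \<in> borel_measurable borel"
  by (intro borel_measurable_continuous_onI continuous_on_prim)

lemma prim_le_powr_near_0:
  assumes "continuous_on UNIV f" "0 < \<kappa>"
    and "((\<lambda>t. \<bar>f t\<bar> / \<bar>t\<bar> powr \<kappa>) \<longlongrightarrow> 0) (at 0)"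
  shows "\<exists>\<delta>>0. \<forall>s. 0 \<le> s \<longrightarrow> s < \<delta> \<longrightarrow> prim f s \<le> s powr (\<kappa> + 1)"
proof -
  have "\<forall>\<^sub>F t in at 0. \<bar>f t\<bar> / \<bar>t\<bar> powr \<kappa> < 1"
    using assms(3) by (rule order_tendstoD) simp
  then obtain \<delta> where "\<delta> > 0" and small: "\<And>t. t \<noteq> 0 \<Longrightarrow> \<bar>t\<bar> < \<delta> \<Longrightarrow> \<bar>f t\<bar> < \<bar>t\<bar> powr \<kappa>"
    unfolding eventually_at by (auto simp: divide_less_eq)
  have "prim f s \<le> s powr (\<kappa> + 1)" if "0 \<le> s" "s < \<delta>" for s
  proof (cases "s = 0")
    case False
    then have "0 < s" using that by simp
    obtain z where z: "0 < z" "z < s" and mvt: "prim f s - prim f 0 = (s - 0) * f z"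
      using MVT2[OF \<open>0 < s\<close>, of "prim f" f] has_real_derivative_prim[OF assms(1)] by blast
    have "f z \<le> z powr \<kappa>" using small[of z] z that by simp
    also have "\<dots> \<le> s powr \<kappa>" using z assms(2) by (intro powr_mono2) auto
    finally have "prim f s \<le> s * s powr \<kappa>" using mvt z by (simp add: mult_left_mono)
    then show ?thesis using \<open>0 < s\<close> by (simp add: powr_add mult.commute)
  qed simp
  then show ?thesis using \<open>\<delta> > 0\<close> by blast
qed

locale ambrosetti_rabinowitz =
  fixes f :: "real \<Rightarrow> real" and \<theta> :: real
  assumes continuous_f: "continuous_on UNIV f"
    and exponent_pos: "0 < \<theta>"
    and AR_condition: "t \<noteq> 0 \<Longrightarrow> 0 < \<theta> * prim f t \<and> \<theta> * prim f t \<le> t * f t"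
begin

lemma prim_pos: "t \<noteq> 0 \<Longrightarrow> 0 < prim f t"
  using AR_condition[of t] exponent_pos by (simp add: zero_less_mult_iff)

lemma prim_nonneg: "0 \<le> prim f t"
  using prim_pos[of t] by (cases "t = 0") auto

lemma f_pos:
  assumes "0 < t"
  shows "0 < f t"
proof -
  have "0 < t * f t" using AR_condition[of t] assms by linarith
  then show ?thesis using assms by (simp add: zero_less_mult_iff)
qed

lemma prim_mono:
  assumes "0 \<le> s" "s \<le> s'"
  shows "prim f s \<le> prim f s'"
proof (rule DERIV_nonneg_imp_increasing_open[OF assms(2)])
  show "\<exists>y. (prim f has_real_derivative y) (at x) \<and> 0 \<le> y" if "s < x" for x
    using has_real_derivative_prim[OF continuous_f] f_pos[of x] that assms(1) by force
  show "continuous_on {s..s'} (prim f)"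
    using continuous_on_prim[OF continuous_f] by (rule continuous_on_subset) simp
qed

lemma prim_ge_powr:
  assumes "1 \<le> s"
  shows "prim f 1 * s powr \<theta> \<le> prim f s"
proof -
  define g where "g x = ln (prim f x) - \<theta> * ln x" for x
  have "g 1 \<le> g s"
  proof (rule DERIV_nonneg_imp_increasing_open[OF assms])
    fix x assume x: "1 < x" "x < s"
    have prim_x: "0 < prim f x" using prim_pos x by simp
    have "(g has_real_derivative (f x / prim f x - \<theta> / x)) (at x)"
      unfolding g_def using prim_x x
      by (auto intro!: derivative_eq_intros has_real_derivative_prim[OF continuous_f])
    moreover have "\<theta> / x \<le> f x / prim f x"
      using AR_condition[of x] prim_x x by (simp add: field_simps)
    ultimately show "\<exists>y. (g has_real_derivative y) (at x) \<and> 0 \<le> y" by auto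
  next
    have "continuous_on {1..s} (prim f)"
      using continuous_on_prim[OF continuous_f] by (rule continuous_on_subset) simp
    moreover have "prim f x \<noteq> 0" if "x \<in> {1..s}" for x
      using prim_pos[of x] that by simp
    ultimately show "continuous_on {1..s} g"
      unfolding g_def by (intro continuous_intros) auto
  qed
  then have "ln (prim f 1 * s powr \<theta>) \<le> ln (prim f s)"
    using prim_pos[of 1] assms by (simp add: g_def ln_mult)
  then show ?thesis
    using prim_pos[of 1] prim_pos[of s] assms by simp
qed

end

section \<open>Positivity of the Gagliardo seminorm\<close>

(* Integrability is needed throughout: LINT of a non-integrable function is 0. *)
context
  fixes u :: "real \<Rightarrow> real" and L M :: real
  assumes lipschitz: "L-lipschitz_on UNIV u"
    and bounded: "\<And>x. \<bar>u x\<bar> \<le> M"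
    and support: "\<And>x. 1 < \<bar>x\<bar> \<Longrightarrow> u x = 0"
begin

private lemma measurable_profile: "u \<in> borel_measurable borel"
  using lipschitz_on_continuous_on[OF lipschitz] by (rule borel_measurable_continuous_onI)

lemma gagliardo_integrand_le:
  "(u x - u y)\<^sup>2 / (x - y)\<^sup>2 \<le> max (L\<^sup>2) (4 * M\<^sup>2) * inverse_square_weight (y - x)"
proof (cases "\<bar>y - x\<bar> \<le> 1")
  case True
  have "\<bar>u x - u y\<bar> \<le> \<bar>L * (x - y)\<bar>"
    using lipschitz_onD[OF lipschitz] lipschitz_on_nonneg[OF lipschitz]
    by (simp add: dist_real_def abs_mult)
  then have "(u x - u y)\<^sup>2 \<le> (L * (x - y))\<^sup>2"
    by (simp only: abs_le_square_iff)
  then have "(u x - u y)\<^sup>2 / (x - y)\<^sup>2 \<le> L\<^sup>2"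
    by (cases "x = y") (simp_all add: divide_le_eq power_mult_distrib)
  then show ?thesis using True by (simp add: inverse_square_weight_near)
next
  case False
  have "\<bar>u x - u y\<bar> \<le> \<bar>2 * M\<bar>" using bounded[of x] bounded[of y] by linarith
  then have "(u x - u y)\<^sup>2 \<le> 4 * M\<^sup>2"
    by (simp add: abs_le_square_iff power_mult_distrib)
  then show ?thesis
    using False by (simp add: inverse_square_weight_far power2_commute divide_right_mono)
qed

lemma integrable_gagliardo_integrand: "integrable lborel (\<lambda>y. (u x - u y)\<^sup>2 / (x - y)\<^sup>2)"
proof (rule Bochner_Integration.integrable_bound)
  note measurable_profile [measurable]
  show "integrable lborel (\<lambda>y. max (L\<^sup>2) (4 * M\<^sup>2) * inverse_square_weight (y - x))"
    using lborel_integrable_real_affine[OF integrable_inverse_square_weight, of 1 "-x"] by simp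
  show "(\<lambda>y. (u x - u y)\<^sup>2 / (x - y)\<^sup>2) \<in> borel_measurable lborel" by measurable
qed (use gagliardo_integrand_le in \<open>auto intro: order_trans[OF _ abs_ge_self]\<close>)

lemma gagliardo_inner_le:
  "(LINT y|lborel. (u x - u y)\<^sup>2 / (x - y)\<^sup>2)
     \<le> max (L\<^sup>2) (4 * M\<^sup>2) * (LINT s|lborel. inverse_square_weight s)"
proof -
  have "(LINT y|lborel. (u x - u y)\<^sup>2 / (x - y)\<^sup>2)
      \<le> (LINT y|lborel. max (L\<^sup>2) (4 * M\<^sup>2) * inverse_square_weight (y - x))"
    using lborel_integrable_real_affine[OF integrable_inverse_square_weight, of 1 "-x"]
    by (intro integral_mono integrable_gagliardo_integrand gagliardo_integrand_le) auto
  then show ?thesis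
    using lborel_integral_real_affine[of 1 inverse_square_weight "-x"] by simp
qed

lemma gagliardo_inner_le_far:
  assumes "2 \<le> \<bar>x\<bar>"
  shows "(LINT y|lborel. (u x - u y)\<^sup>2 / (x - y)\<^sup>2) \<le> 8 * M\<^sup>2 * inverse_square_weight x"
proof -
  have pointwise: "(u x - u y)\<^sup>2 / (x - y)\<^sup>2 \<le> 4 * M\<^sup>2 / x\<^sup>2 * indicator {-1..1} y" for y
  proof (cases "y \<in> {-1..1}")
    case True
    have "\<bar>x\<bar> \<le> \<bar>x - y\<bar> + \<bar>y\<bar>" using abs_triangle_ineq[of "x - y" y] by simp
    moreover have "\<bar>y\<bar> \<le> 1" using True by auto
    ultimately have "\<bar>x / 2\<bar> \<le> \<bar>x - y\<bar>" using assms by simp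
    then have "x\<^sup>2 / 4 \<le> (x - y)\<^sup>2"
      by (subst (asm) abs_le_square_iff) (simp add: power_divide)
    moreover have "(u y)\<^sup>2 \<le> M\<^sup>2" using bounded[of y] abs_le_square_iff[of "u y" M] by simp
    moreover have "0 < x\<^sup>2" using assms by auto
    ultimately have "(u y)\<^sup>2 / (x - y)\<^sup>2 \<le> M\<^sup>2 / (x\<^sup>2 / 4)"
      by (intro frac_le) auto
    then show ?thesis using True support[of x] assms by (simp add: mult.commute)
  next
    case False
    then have "u y = 0" "u x = 0" using support assms by auto
    then show ?thesis using False by simp
  qed
  have "(LINT y|lborel. (u x - u y)\<^sup>2 / (x - y)\<^sup>2)
      \<le> (LINT y|lborel. 4 * M\<^sup>2 / x\<^sup>2 * indicator {-1..1::real} y)"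
    by (rule integral_mono[OF integrable_gagliardo_integrand _ pointwise]) simp
  also have "\<dots> = 8 * M\<^sup>2 * (1 / x\<^sup>2)"
    by simp
  also have "\<dots> = 8 * M\<^sup>2 * inverse_square_weight x"
    using assms by (subst inverse_square_weight_far) auto
  finally show ?thesis .
qed

lemma integrable_gagliardo_inner: "integrable lborel (\<lambda>x. LINT y|lborel. (u x - u y)\<^sup>2 / (x - y)\<^sup>2)"
proof (rule Bochner_Integration.integrable_bound)
  note measurable_profile [measurable]
  define C where "C = max (L\<^sup>2) (4 * M\<^sup>2) * (LINT s|lborel. inverse_square_weight s)"
  define D where "D = max (4 * C) (8 * M\<^sup>2)"
  show "integrable lborel (\<lambda>x. D * inverse_square_weight x)"
    using integrable_inverse_square_weight by simp
  have "0 \<le> C"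
    unfolding C_def using inverse_square_weight_pos
    by (intro mult_nonneg_nonneg integral_nonneg_AE) (auto intro: less_imp_le simp: le_max_iff_disj)
  have "(LINT y|lborel. (u x - u y)\<^sup>2 / (x - y)\<^sup>2) \<le> D * inverse_square_weight x" for x
  proof (cases "2 \<le> \<bar>x\<bar>")
    case True
    have "8 * M\<^sup>2 * inverse_square_weight x \<le> D * inverse_square_weight x"
      unfolding D_def using inverse_square_weight_pos[of x] by (intro mult_right_mono) auto
    then show ?thesis using gagliardo_inner_le_far[OF True] by linarith
  next
    case False
    have "1 \<le> 4 * inverse_square_weight x" using inverse_square_weight_ge[of x] False by simp
    then have "C * 1 \<le> C * (4 * inverse_square_weight x)" using \<open>0 \<le> C\<close> by (rule mult_left_mono)
    then have "C \<le> 4 * C * inverse_square_weight x" by (simp add: mult_ac)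
    also have "\<dots> \<le> D * inverse_square_weight x"
      unfolding D_def using inverse_square_weight_pos[of x] by (intro mult_right_mono) auto
    finally show ?thesis using gagliardo_inner_le[of x] by (simp add: C_def)
  qed
  then show "AE x in lborel. norm (LINT y|lborel. (u x - u y)\<^sup>2 / (x - y)\<^sup>2)
      \<le> norm (D * inverse_square_weight x)"
    by (intro AE_I2) (simp add: integral_nonneg_AE order_trans[OF _ abs_ge_self])
  show "(\<lambda>x. LINT y|lborel. (u x - u y)\<^sup>2 / (x - y)\<^sup>2) \<in> borel_measurable lborel"
    by measurable
qed

lemma frac_seminorm_sq_pos:
  assumes "a < b" "0 < m" and lower: "\<And>y. y \<in> {a..b} \<Longrightarrow> m \<le> \<bar>u y\<bar>"
  shows "0 < frac_seminorm_sq u"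
proof -
  \<comment> \<open>already the pairs with x in [2, 3], where u vanishes, and y in [a, b] contribute\<close>
  have inner: "m\<^sup>2 / 16 * (b - a) \<le> (LINT y|lborel. (u x - u y)\<^sup>2 / (x - y)\<^sup>2)"
    if "x \<in> {2..3}" for x
  proof -
    have "m\<^sup>2 / 16 * indicator {a..b} y \<le> (u x - u y)\<^sup>2 / (x - y)\<^sup>2" for y
    proof (cases "y \<in> {a..b}")
      case True
      have "\<bar>y\<bar> \<le> 1" using lower[OF True] support[of y] \<open>0 < m\<close> by force
      then have "\<bar>x - y\<bar> \<le> \<bar>4\<bar>" "x \<noteq> y" using that by auto
      then have "(x - y)\<^sup>2 \<le> 4\<^sup>2" "0 < (x - y)\<^sup>2"
        by (simp_all only: abs_le_square_iff) simp
      moreover have "m\<^sup>2 \<le> (u y)\<^sup>2"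
        using lower[OF True] \<open>0 < m\<close> by (simp add: abs_le_square_iff[symmetric])
      ultimately have "m\<^sup>2 / 16 \<le> (u y)\<^sup>2 / (x - y)\<^sup>2" by (intro frac_le) auto
      moreover have "u x = 0" using support that by simp
      ultimately show ?thesis using True by simp
    qed simp
    then have "(LINT y|lborel. m\<^sup>2 / 16 * indicator {a..b} y) \<le> (LINT y|lborel. (u x - u y)\<^sup>2 / (x - y)\<^sup>2)"
      by (intro integral_mono integrable_gagliardo_integrand) (use \<open>a < b\<close> in auto)
    then show ?thesis using \<open>a < b\<close> by simp
  qed
  have "(LINT x|lborel. m\<^sup>2 / 16 * (b - a) * indicator {2..3::real} x)
      \<le> (LINT x|lborel. LINT y|lborel. (u x - u y)\<^sup>2 / (x - y)\<^sup>2)"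
  proof (rule integral_mono[OF _ integrable_gagliardo_inner])
    show "m\<^sup>2 / 16 * (b - a) * indicator {2..3} x \<le> (LINT y|lborel. (u x - u y)\<^sup>2 / (x - y)\<^sup>2)" for x
      using inner[of x] by (cases "x \<in> {2..3}") (auto simp: integral_nonneg_AE)
  qed simp
  moreover have "0 < m\<^sup>2 / 16 * (b - a)" using assms by simp
  ultimately show ?thesis unfolding frac_seminorm_sq_def by simp
qed

end

section \<open>The Moser-type functions varpi n\<close>

lemma borel_measurable_varpi [measurable]: "varpi n \<in> borel_measurable borel"
  unfolding varpi_def[abs_def] by measurable

lemma lipschitz_on_ln:
  assumes "0 < e"
  shows "(1 / e)-lipschitz_on {e..} ln"
proof (rule lipschitz_on_leI)
  fix x y :: real assume "x \<in> {e..}" "y \<in> {e..}" "x \<le> y"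
  then have "ln y - ln x \<le> (y - x) / x" using assms by (intro ln_diff_le) auto
  also have "\<dots> \<le> (y - x) / e" using assms \<open>x \<in> {e..}\<close> \<open>x \<le> y\<close> by (intro divide_left_mono) auto
  finally show "dist (ln x) (ln y) \<le> 1 / e * dist x y"
    using assms \<open>x \<in> {e..}\<close> \<open>x \<le> y\<close> by (simp add: dist_real_def)
qed (use assms in simp)

context
  fixes n :: nat
  assumes n: "2 \<le> n"
begin

lemma ln_n_pos: "0 < ln (real n)"
  using n by simp

lemma varpi_eq_ln:
  "varpi n x = ln (1 / min 1 (max (1 / real n) \<bar>x\<bar>)) / (sqrt pi * sqrt (ln n))"
proof -
  consider "\<bar>x\<bar> < 1 / real n" | "1 / real n \<le> \<bar>x\<bar>" "\<bar>x\<bar> \<le> 1" | "1 < \<bar>x\<bar>" by linarith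
  then show ?thesis
  proof cases
    case 1
    then have "min 1 (max (1 / real n) \<bar>x\<bar>) = 1 / real n" using n by simp
    moreover have "ln (real n) / sqrt (ln (real n)) = sqrt (ln (real n))"
      using ln_n_pos by (simp add: real_div_sqrt)
    ultimately show ?thesis using 1 n by (simp add: varpi_def ln_div field_simps)
  next
    case 2
    then show ?thesis by (simp add: varpi_def)
  next
    case 3
    moreover have "1 / real n < 1" using n by simp
    ultimately show ?thesis by (simp add: varpi_def)
  qed
qed

lemma ln_inverse_clamp_bounds:
  "0 \<le> ln (1 / min 1 (max (1 / real n) \<bar>x\<bar>))" "ln (1 / min 1 (max (1 / real n) \<bar>x\<bar>)) \<le> ln n"
proof -
  define c where "c = min 1 (max (1 / real n) \<bar>x\<bar>)"
  have "1 / real n \<le> c" "c \<le> 1" "0 < 1 / real n" using n by (auto simp: c_def)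
  then have "0 < c" by linarith
  with \<open>1 / real n \<le> c\<close> \<open>c \<le> 1\<close> n have "1 \<le> 1 / c" "1 / c \<le> real n" by (simp_all add: field_simps)
  then show "0 \<le> ln (1 / c)" "ln (1 / c) \<le> ln n"
    by (simp, metis ln_le_cancel_iff less_le_trans zero_less_one)
qed

lemma varpi_nonneg: "0 \<le> varpi n x"
  unfolding varpi_eq_ln using ln_inverse_clamp_bounds(1) ln_n_pos by simp

lemma varpi_le: "varpi n x \<le> sqrt (ln n) / sqrt pi"
proof -
  have "ln (1 / min 1 (max (1 / real n) \<bar>x\<bar>)) \<le> ln n"
    by (rule ln_inverse_clamp_bounds(2))
  then have "varpi n x \<le> ln n / (sqrt pi * sqrt (ln n))"
    unfolding varpi_eq_ln using ln_n_pos by (intro divide_right_mono) auto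
  also have "\<dots> = sqrt (ln n) / sqrt pi"
    using n by (simp add: real_div_sqrt field_simps)
  finally show ?thesis .
qed

lemma varpi_eq_0:
  assumes "1 < \<bar>x\<bar>"
  shows "varpi n x = 0"
proof -
  have "1 / real n < 1" using n by simp
  then show ?thesis using assms by (simp add: varpi_def)
qed

lemma varpi_near_0: "\<bar>x\<bar> < 1 / real n \<Longrightarrow> varpi n x = sqrt (ln n) / sqrt pi"
  by (simp add: varpi_def)

lemma lipschitz_varpi: "(real n / (sqrt pi * sqrt (ln n)))-lipschitz_on UNIV (varpi n)"
proof -
  define K where "K = sqrt pi * sqrt (ln n)"
  have "0 < K" using ln_n_pos by (simp add: K_def)
  have clamp: "1-lipschitz_on UNIV (\<lambda>x. min 1 (max (1 / real n) \<bar>x\<bar>))"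
    by (rule lipschitz_onI) (auto simp: dist_real_def min_def max_def abs_if)
  have "(real n)-lipschitz_on {1 / real n..} ln"
    using lipschitz_on_ln[of "1 / real n"] n by simp
  then have "(real n)-lipschitz_on {1 / real n..} (\<lambda>p. ln (1 / p))"
    by (rule lipschitz_on_transform[OF lipschitz_on_minus]) (use n in \<open>auto simp: ln_div\<close>)
  then have "(1 / K * real n)-lipschitz_on {1 / real n..} (\<lambda>p. 1 / K * ln (1 / p))"
    using \<open>0 < K\<close> by (intro lipschitz_on_cmult_real_nonneg) auto
  then have "(1 / K * real n)-lipschitz_on ((\<lambda>x. min 1 (max (1 / real n) \<bar>x\<bar>)) ` UNIV) (\<lambda>p. 1 / K * ln (1 / p))"
    by (rule lipschitz_on_subset) (use n in auto)
  from lipschitz_on_compose2[OF clamp this] show ?thesis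
    by (simp add: varpi_eq_ln K_def)
qed

lemma L2norm_varpi_pos: "0 < L2norm (varpi n)"
proof -
  define V where "V = sqrt (ln n) / sqrt pi"
  have bound: "(varpi n x)\<^sup>2 \<le> V\<^sup>2 * indicator {-1..1} x" for x
  proof (cases "x \<in> {-1..1}")
    case True
    then show ?thesis
      unfolding V_def using varpi_nonneg[of x] varpi_le[of x] by (simp add: power_mono)
  next
    case False
    then have "varpi n x = 0" by (intro varpi_eq_0) auto
    then show ?thesis by simp
  qed
  have integrable: "integrable lborel (\<lambda>x. (varpi n x)\<^sup>2)"
  proof (rule Bochner_Integration.integrable_bound)
    show "integrable lborel (\<lambda>x. V\<^sup>2 * indicator {-1..1::real} x)" by simp
    show "AE x in lborel. norm ((varpi n x)\<^sup>2) \<le> norm (V\<^sup>2 * indicator {-1..1::real} x)"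
      by (intro AE_I2) (simp add: bound order_trans[OF bound abs_ge_self])
  qed measurable
  have "V\<^sup>2 * indicator {-(1 / real n)<..<1 / real n} x \<le> (varpi n x)\<^sup>2" for x
  proof (cases "x \<in> {-(1 / real n)<..<1 / real n}")
    case True
    then have "\<bar>x\<bar> < 1 / real n" by auto
    then show ?thesis using True by (simp add: varpi_near_0 V_def)
  qed simp
  then have "(LINT x|lborel. V\<^sup>2 * indicator {-(1 / real n)<..<1 / real n} x) \<le> (LINT x|lborel. (varpi n x)\<^sup>2)"
    by (intro integral_mono integrable) auto
  moreover have "0 < (LINT x|lborel. V\<^sup>2 * indicator {-(1 / real n)<..<1 / real n::real} x)"
    using n ln_n_pos by (simp add: V_def)
  ultimately show ?thesis unfolding L2norm_def by simp
qed

end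

section \<open>The fibering map\<close>

lemma continuous_on_atLeast_attains_max:
  fixes \<phi> :: "real \<Rightarrow> real"
  assumes cont: "continuous_on {a..} \<phi>" and "a \<le> t\<^sub>1" "\<phi> a < \<phi> t\<^sub>1"
    and "\<forall>\<^sub>F t in at_top. \<phi> t \<le> \<phi> a"
  shows "\<exists>s>a. \<phi> a < \<phi> s \<and> (\<forall>t\<ge>a. \<phi> t \<le> \<phi> s)"
proof -
  obtain T0 where T0: "\<And>t. T0 \<le> t \<Longrightarrow> \<phi> t \<le> \<phi> a"
    using assms(4) by (auto simp: eventually_at_top_linorder)
  define T where "T = max T0 t\<^sub>1"
  have T: "\<And>t. T \<le> t \<Longrightarrow> \<phi> t \<le> \<phi> a" and "t\<^sub>1 \<le> T"
    using T0 by (auto simp: T_def)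
  have "continuous_on {a..T} \<phi>" using cont by (rule continuous_on_subset) auto
  moreover have "{a..T} \<noteq> {}" using assms(2) \<open>t\<^sub>1 \<le> T\<close> by simp
  ultimately obtain s where s: "s \<in> {a..T}" and max: "\<And>t. t \<in> {a..T} \<Longrightarrow> \<phi> t \<le> \<phi> s"
    using continuous_attains_sup[OF compact_Icc] by blast
  have "\<phi> a < \<phi> s" using max[of t\<^sub>1] assms(2,3) \<open>t\<^sub>1 \<le> T\<close> by simp
  moreover have "\<phi> t \<le> \<phi> s" if "a \<le> t" for t
  proof (cases "t \<le> T")
    case True
    then show ?thesis using max that by simp
  next
    case False
    then show ?thesis using T[of t] \<open>\<phi> a < \<phi> s\<close> by simp
  qed
  moreover have "a < s" using s \<open>\<phi> a < \<phi> s\<close> by (cases "s = a") auto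
  ultimately show ?thesis by blast
qed

(* Phi of the paper, with omega_n replaced by an arbitrary profile u *)
definition fibering :: "(real \<Rightarrow> real) \<Rightarrow> real \<Rightarrow> (real \<Rightarrow> real) \<Rightarrow> real \<Rightarrow> real" where
  "fibering f \<mu> u t =
     t\<^sup>2 / 2 * frac_seminorm_sq u - 1/2 * t powr (2 * (\<mu> - 2)) * choquard f \<mu> (\<lambda>x. t * u x)"

lemma fibering_0 [simp]: "fibering f \<mu> u 0 = 0"
  by (simp add: fibering_def)

lemma Phi_eq_fibering: "Phi f \<mu> a n = fibering f \<mu> (omega a n)"
  \<comment> \<open>the case t = 0 of Phi is absorbed because 0 powr _ = 0\<close>
  by (simp add: fun_eq_iff Phi_def fibering_def)

lemma fibering_eq_mult:
  assumes "0 < t"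
  shows "fibering f \<mu> u t
    = t\<^sup>2 * (frac_seminorm_sq u / 2 - t powr (2 * \<mu> - 6) * choquard f \<mu> (\<lambda>x. t * u x) / 2)"
proof -
  have "t powr (2 * (\<mu> - 2)) = t powr 2 * t powr (2 * \<mu> - 6)"
    by (simp add: powr_add[symmetric] algebra_simps)
  also have "t powr 2 = t\<^sup>2"
    using assms by (simp add: powr_realpow)
  finally show ?thesis by (simp add: fibering_def right_diff_distrib)
qed

locale choquard_profile = ambrosetti_rabinowitz f \<theta> for f \<theta> +
  fixes \<mu> :: real and u :: "real \<Rightarrow> real" and M :: real and S :: "real set"
  assumes exponent: "0 \<le> \<mu>" "\<mu> < 1"
    and measurable_profile [measurable]: "u \<in> borel_measurable borel"
    and profile_nonneg: "0 \<le> u x"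
    and profile_le: "u x \<le> M * indicator S x"
    and profile_bound_nonneg: "0 \<le> M"
    and sets_support [measurable]: "S \<in> sets borel"
    and finite_support: "emeasure lborel S < \<infinity>"
begin

lemma riesz_density_scaled:
  assumes "0 \<le> t" "t \<le> T"
  shows "riesz_density \<mu> S (prim f (T * M)) (\<lambda>y. prim f (t * u y))"
proof
  have [measurable]: "prim f \<in> borel_measurable borel"
    by (rule borel_measurable_prim[OF continuous_f])
  show "(\<lambda>y. prim f (t * u y)) \<in> borel_measurable borel" by measurable
  show "prim f (t * u y) \<le> prim f (T * M) * indicator S y" for y
  proof (cases "y \<in> S")
    case True
    then have "t * u y \<le> T * M"
      using profile_le[of y] profile_nonneg[of y] assms by (simp add: mult_mono)
    then show ?thesis
      using True assms profile_nonneg[of y] by (simp add: prim_mono)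
  next
    case False
    then have "u y = 0" using profile_le[of y] profile_nonneg[of y] by simp
    then show ?thesis using False by simp
  qed
qed (use exponent prim_nonneg sets_support finite_support in auto)

lemma choquard_scaled_nonneg: "0 \<le> t \<Longrightarrow> 0 \<le> choquard f \<mu> (\<lambda>x. t * u x)"
  unfolding choquard_eq_riesz_energy
  using riesz_density.riesz_energy_nonneg[OF riesz_density_scaled] by blast

lemma choquard_scaled_le:
  "0 \<le> t \<Longrightarrow> choquard f \<mu> (\<lambda>x. t * u x)
     \<le> (prim f (t * M))\<^sup>2 * (2 / (1 - \<mu>) + measure lborel S) * measure lborel S"
  unfolding choquard_eq_riesz_energy
  using riesz_density.riesz_energy_le[OF riesz_density_scaled] by blast

lemma continuous_on_choquard_scaled: "continuous_on {0..} (\<lambda>t. choquard f \<mu> (\<lambda>x. t * u x))"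
proof (rule continuous_on_sequentiallyI)
  fix ts :: "nat \<Rightarrow> real" and s
  assume ts: "\<forall>i. ts i \<in> {0..}" and "s \<in> {0..}" and lim: "ts \<longlonglongrightarrow> s"
  obtain K where K: "\<And>i. norm (ts i) \<le> K"
    using convergent_imp_Bseq[OF convergentI[OF lim]] by (auto simp: Bseq_def)
  define T where "T = K + s"
  have "0 \<le> K" using K[of 0] by simp
  have approx: "riesz_density \<mu> S (prim f (T * M)) (\<lambda>y. prim f (ts i * u y))" for i
    using ts K[of i] \<open>s \<in> {0..}\<close> by (intro riesz_density_scaled) (auto simp: T_def)
  have limit: "riesz_density \<mu> S (prim f (T * M)) (\<lambda>y. prim f (s * u y))"
    using \<open>s \<in> {0..}\<close> \<open>0 \<le> K\<close> by (intro riesz_density_scaled) (auto simp: T_def)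
  have pointwise: "(\<lambda>i. prim f (ts i * u y)) \<longlonglongrightarrow> prim f (s * u y)" for y
    using continuous_on_prim[OF continuous_f]
    by (intro isCont_tendsto_compose[where g="prim f"] tendsto_intros lim)
       (simp add: continuous_on_eq_continuous_at)
  show "(\<lambda>i. choquard f \<mu> (\<lambda>x. ts i * u x)) \<longlonglongrightarrow> choquard f \<mu> (\<lambda>x. s * u x)"
    unfolding choquard_eq_riesz_energy
    by (rule riesz_density.riesz_energy_tendsto[OF limit approx pointwise])
qed

lemma eventually_choquard_scaled_le_powr:
  assumes "0 < \<kappa>" and "((\<lambda>t. \<bar>f t\<bar> / \<bar>t\<bar> powr \<kappa>) \<longlongrightarrow> 0) (at 0)"
  shows "\<exists>K. \<forall>\<^sub>F t in at_right 0. choquard f \<mu> (\<lambda>x. t * u x) \<le> K * t powr (2 * \<kappa> + 2)"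
proof -
  obtain \<delta> where "0 < \<delta>" and small: "\<And>s. 0 \<le> s \<Longrightarrow> s < \<delta> \<Longrightarrow> prim f s \<le> s powr (\<kappa> + 1)"
    using prim_le_powr_near_0[OF continuous_f assms] by blast
  define C where "C = (2 / (1 - \<mu>) + measure lborel S) * measure lborel S"
  define K where "K = C * M powr (2 * \<kappa> + 2)"
  have "0 \<le> C" using exponent by (simp add: C_def)
  have "choquard f \<mu> (\<lambda>x. t * u x) \<le> K * t powr (2 * \<kappa> + 2)" if "0 < t" "t * M < \<delta>" for t
  proof -
    have "prim f (t * M) \<le> (t * M) powr (\<kappa> + 1)"
      using that profile_bound_nonneg by (intro small) auto
    then have "(prim f (t * M))\<^sup>2 \<le> ((t * M) powr (\<kappa> + 1))\<^sup>2"
      using prim_nonneg by (intro power_mono) auto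
    also have "\<dots> = t powr (2 * \<kappa> + 2) * M powr (2 * \<kappa> + 2)"
      using that profile_bound_nonneg
      by (simp add: power2_eq_square powr_add[symmetric] powr_mult[symmetric] algebra_simps)
    finally have "(prim f (t * M))\<^sup>2 * C \<le> t powr (2 * \<kappa> + 2) * M powr (2 * \<kappa> + 2) * C"
      using \<open>0 \<le> C\<close> by (rule mult_right_mono)
    then show ?thesis
      using choquard_scaled_le[of t] that by (simp add: C_def K_def mult_ac)
  qed
  moreover have "\<forall>\<^sub>F t in at_right 0. 0 < t \<and> t * M < \<delta>"
  proof -
    have "((\<lambda>t. t * M) \<longlongrightarrow> 0 * M) (at_right (0::real))" by (intro tendsto_intros)
    then have "\<forall>\<^sub>F t in at_right 0. t * M < \<delta>"
      using \<open>0 < \<delta>\<close> by (auto dest: order_tendstoD(2))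
    then show ?thesis using eventually_at_right_less by (rule eventually_conj[rotated])
  qed
  ultimately have "\<forall>\<^sub>F t in at_right 0. choquard f \<mu> (\<lambda>x. t * u x) \<le> K * t powr (2 * \<kappa> + 2)"
    by (auto elim: eventually_mono)
  then show ?thesis by blast
qed

lemma tendsto_choquard_scaled_at_0:
  assumes "2 - \<mu> < \<kappa>" and "((\<lambda>t. \<bar>f t\<bar> / \<bar>t\<bar> powr \<kappa>) \<longlongrightarrow> 0) (at 0)"
  shows "((\<lambda>t. t powr (2 * \<mu> - 6) * choquard f \<mu> (\<lambda>x. t * u x)) \<longlongrightarrow> 0) (at_right 0)"
proof -
  have "0 < \<kappa>" using assms(1) exponent by simp
  then obtain K where K: "\<forall>\<^sub>F t in at_right 0. choquard f \<mu> (\<lambda>x. t * u x) \<le> K * t powr (2 * \<kappa> + 2)"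
    using eventually_choquard_scaled_le_powr assms(2) by blast
  have upper: "\<forall>\<^sub>F t in at_right 0.
      t powr (2 * \<mu> - 6) * choquard f \<mu> (\<lambda>x. t * u x) \<le> K * t powr (2 * \<mu> + 2 * \<kappa> - 4)"
    using K
  proof eventually_elim
    case (elim t)
    then have "t powr (2 * \<mu> - 6) * choquard f \<mu> (\<lambda>x. t * u x) \<le> t powr (2 * \<mu> - 6) * (K * t powr (2 * \<kappa> + 2))"
      by (rule mult_left_mono) simp
    also have "\<dots> = K * t powr (2 * \<mu> + 2 * \<kappa> - 4)"
      by (simp add: powr_add[symmetric] algebra_simps)
    finally show ?case .
  qed
  have lower: "\<forall>\<^sub>F t in at_right 0. 0 \<le> t powr (2 * \<mu> - 6) * choquard f \<mu> (\<lambda>x. t * u x)"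
    using eventually_at_right_less by eventually_elim (simp add: choquard_scaled_nonneg)
  have "((\<lambda>t. t powr (2 * \<mu> + 2 * \<kappa> - 4)) \<longlongrightarrow> 0) (at_right 0)"
    using assms(1) eventually_mono[OF eventually_at_right_less[of 0] less_imp_le]
    by (intro tendsto_zero_powrI[OF tendsto_ident_at tendsto_const]) auto
  then have "((\<lambda>t. K * t powr (2 * \<mu> + 2 * \<kappa> - 4)) \<longlongrightarrow> 0) (at_right 0)"
    by (rule tendsto_mult_right_zero)
  then show ?thesis by (rule tendsto_sandwich[OF lower upper tendsto_const])
qed

lemma filterlim_choquard_scaled_at_top:
  assumes "3 - \<mu> < \<theta>" "a < b" "0 < m" and lower: "\<And>x. x \<in> {a..b} \<Longrightarrow> m \<le> u x"
  shows "filterlim (\<lambda>t. t powr (2 * \<mu> - 6) * choquard f \<mu> (\<lambda>x. t * u x)) at_top at_top"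
proof -
  define K where "K = (prim f 1)\<^sup>2 * m powr (2 * \<theta>) * (b - a) powr (2 - \<mu>)"
  have "0 < K" using prim_pos[of 1] assms by (simp add: K_def)
  have bound: "K * t powr (2 * \<mu> + 2 * \<theta> - 6) \<le> t powr (2 * \<mu> - 6) * choquard f \<mu> (\<lambda>x. t * u x)"
    if "1 / m \<le> t" for t
  proof -
    have "0 < t" using that \<open>0 < m\<close> by (meson less_le_trans zero_less_divide_1_iff)
    have "1 \<le> t * m" using that \<open>0 < m\<close> by (simp add: divide_le_eq mult.commute)
    define c where "c = prim f 1 * (t * m) powr \<theta>"
    have "c \<le> prim f (t * u y)" if "y \<in> {a..b}" for y
    proof -
      have "c \<le> prim f (t * m)" unfolding c_def using \<open>1 \<le> t * m\<close> by (rule prim_ge_powr)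
      also have "\<dots> \<le> prim f (t * u y)"
        using lower[OF that] \<open>0 < t\<close> \<open>0 < m\<close> by (intro prim_mono mult_left_mono) auto
      finally show ?thesis .
    qed
    then have "c\<^sup>2 * (b - a) powr (2 - \<mu>) \<le> choquard f \<mu> (\<lambda>x. t * u x)"
      unfolding choquard_eq_riesz_energy using \<open>0 < t\<close> \<open>a < b\<close> prim_nonneg[of 1]
      by (intro riesz_density.riesz_energy_ge[OF riesz_density_scaled[of t t]]) (auto simp: c_def)
    then have "t powr (2 * \<mu> - 6) * (c\<^sup>2 * (b - a) powr (2 - \<mu>))
        \<le> t powr (2 * \<mu> - 6) * choquard f \<mu> (\<lambda>x. t * u x)"
      by (rule mult_left_mono) simp
    moreover have "t powr (2 * \<mu> - 6) * (c\<^sup>2 * (b - a) powr (2 - \<mu>)) = K * t powr (2 * \<mu> + 2 * \<theta> - 6)"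
      using \<open>0 < t\<close> \<open>0 < m\<close>
      by (simp add: K_def c_def power2_eq_square powr_mult powr_add[symmetric] algebra_simps)
    ultimately show ?thesis by simp
  qed
  have "\<forall>\<^sub>F t in at_top. K * t powr (2 * \<mu> + 2 * \<theta> - 6) \<le> t powr (2 * \<mu> - 6) * choquard f \<mu> (\<lambda>x. t * u x)"
    by (rule eventually_mono[OF eventually_ge_at_top bound])
  moreover have "filterlim (\<lambda>t. K * t powr (2 * \<mu> + 2 * \<theta> - 6)) at_top at_top"
    using assms(1) \<open>0 < K\<close> by (intro filterlim_tendsto_pos_mult_at_top[OF tendsto_const] real_powr_at_top) auto
  ultimately show ?thesis by (rule filterlim_at_top_mono[rotated])
qed

lemma tendsto_fibering_div_square:
  assumes "2 - \<mu> < \<kappa>" and "((\<lambda>t. \<bar>f t\<bar> / \<bar>t\<bar> powr \<kappa>) \<longlongrightarrow> 0) (at 0)"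
  shows "((\<lambda>t. fibering f \<mu> u t / t\<^sup>2) \<longlongrightarrow> frac_seminorm_sq u / 2) (at_right 0)"
proof -
  have "((\<lambda>t. frac_seminorm_sq u / 2 - t powr (2 * \<mu> - 6) * choquard f \<mu> (\<lambda>x. t * u x) / 2)
      \<longlongrightarrow> frac_seminorm_sq u / 2 - 0 / 2) (at_right 0)"
    by (intro tendsto_intros tendsto_choquard_scaled_at_0[OF assms]) simp
  moreover have "\<forall>\<^sub>F t in at_right 0. frac_seminorm_sq u / 2 - t powr (2 * \<mu> - 6) * choquard f \<mu> (\<lambda>x. t * u x) / 2
      = fibering f \<mu> u t / t\<^sup>2"
    using eventually_at_right_less by eventually_elim (simp add: fibering_eq_mult)
  ultimately show ?thesis by (simp add: Lim_transform_eventually)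
qed

lemma continuous_on_fibering:
  assumes "2 - \<mu> < \<kappa>" and "((\<lambda>t. \<bar>f t\<bar> / \<bar>t\<bar> powr \<kappa>) \<longlongrightarrow> 0) (at 0)"
  shows "continuous_on {0..} (fibering f \<mu> u)"
  unfolding continuous_on_def
proof
  fix s :: real assume "s \<in> {0..}"
  show "(fibering f \<mu> u \<longlongrightarrow> fibering f \<mu> u s) (at s within {0..})"
  proof (cases "s = 0")
    case True
    have "((\<lambda>t. t\<^sup>2 * (fibering f \<mu> u t / t\<^sup>2)) \<longlongrightarrow> 0\<^sup>2 * (frac_seminorm_sq u / 2)) (at_right 0)"
      by (intro tendsto_intros tendsto_fibering_div_square[OF assms])
    moreover have "\<forall>\<^sub>F t in at_right 0. t\<^sup>2 * (fibering f \<mu> u t / t\<^sup>2) = fibering f \<mu> u t"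
      using eventually_at_right_less by eventually_elim simp
    ultimately have "(fibering f \<mu> u \<longlongrightarrow> 0) (at_right 0)"
      by (simp add: Lim_transform_eventually)
    then show ?thesis
      using True by (simp add: at_within_Ici_at_right)
  next
    case False
    have "continuous_on {0<..} (fibering f \<mu> u)"
      unfolding fibering_def
      by (intro continuous_intros continuous_on_subset[OF continuous_on_choquard_scaled]) auto
    then have "isCont (fibering f \<mu> u) s"
      using False \<open>s \<in> {0..}\<close> by (simp add: continuous_on_eq_continuous_at)
    then show ?thesis
      unfolding isCont_def by (rule tendsto_mono[OF at_le, rotated]) simp
  qed
qed

lemma eventually_fibering_pos_at_0:
  assumes "2 - \<mu> < \<kappa>" and "((\<lambda>t. \<bar>f t\<bar> / \<bar>t\<bar> powr \<kappa>) \<longlongrightarrow> 0) (at 0)"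
    and "0 < frac_seminorm_sq u"
  shows "\<forall>\<^sub>F t in at_right 0. 0 < fibering f \<mu> u t"
proof -
  have "\<forall>\<^sub>F t in at_right 0. 0 < fibering f \<mu> u t / t\<^sup>2"
    using assms(3) by (intro order_tendstoD(1)[OF tendsto_fibering_div_square[OF assms(1,2)]]) simp
  then show ?thesis
    using eventually_at_right_less by eventually_elim (simp add: zero_less_divide_iff)
qed

lemma eventually_fibering_neg_at_top:
  assumes "3 - \<mu> < \<theta>" "a < b" "0 < m" "\<And>x. x \<in> {a..b} \<Longrightarrow> m \<le> u x"
  shows "\<forall>\<^sub>F t in at_top. fibering f \<mu> u t < 0"
proof -
  have "\<forall>\<^sub>F t in at_top. frac_seminorm_sq u < t powr (2 * \<mu> - 6) * choquard f \<mu> (\<lambda>x. t * u x)"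
    using filterlim_choquard_scaled_at_top[OF assms] by (simp add: filterlim_at_top_dense)
  then show ?thesis
    using eventually_gt_at_top[of 0] by eventually_elim (simp add: fibering_eq_mult mult_pos_neg)
qed

end

lemma borel_measurable_omega [measurable]: "omega a n \<in> borel_measurable borel"
  unfolding omega_def[abs_def] by measurable

context
  fixes a :: real and n :: nat
  assumes a: "0 < a" and n: "2 \<le> n"
begin

lemma omega_eq_scaled_varpi: "omega a n x = a / L2norm (varpi n) * varpi n x"
  by (simp add: omega_def)

lemma omega_at_0: "omega a n 0 = a / L2norm (varpi n) * (sqrt (ln n) / sqrt pi)"
  using n by (simp add: omega_eq_scaled_varpi varpi_near_0 del: times_divide_eq_right)

lemma omega_0_pos: "0 < omega a n 0"
  using a n L2norm_varpi_pos[OF n] by (simp add: omega_at_0)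

lemma omega_nonneg: "0 \<le> omega a n x"
  using a L2norm_varpi_pos[OF n] varpi_nonneg[OF n] by (simp add: omega_eq_scaled_varpi)

lemma omega_le_indicator: "omega a n x \<le> omega a n 0 * indicator {-1..1} x"
proof (cases "x \<in> {-1..1}")
  case True
  have "a / L2norm (varpi n) * varpi n x \<le> a / L2norm (varpi n) * (sqrt (ln n) / sqrt pi)"
    using a L2norm_varpi_pos[OF n] varpi_le[OF n] by (intro mult_left_mono) auto
  then show ?thesis
    using True by (simp only: omega_eq_scaled_varpi[of x] omega_at_0) simp
next
  case False
  then have "1 < \<bar>x\<bar>" by auto
  then show ?thesis using False by (simp add: omega_eq_scaled_varpi varpi_eq_0[OF n])
qed

lemma omega_peak_le:
  assumes "x \<in> {-(1 / (2 * real n))..1 / (2 * real n)}"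
  shows "omega a n 0 \<le> omega a n x"
proof -
  have "\<bar>x\<bar> \<le> 1 / (2 * real n)" using assms by auto
  also have "\<dots> < 1 / real n" using n by (simp add: divide_strict_left_mono)
  finally have "omega a n x = omega a n 0"
    by (simp only: omega_eq_scaled_varpi[of x] omega_at_0 varpi_near_0[OF n])
  then show ?thesis by simp
qed

lemma frac_seminorm_sq_omega_pos: "0 < frac_seminorm_sq (omega a n)"
proof (rule frac_seminorm_sq_pos)
  show "(a / L2norm (varpi n) * (real n / (sqrt pi * sqrt (ln n))))-lipschitz_on UNIV (omega a n)"
    unfolding omega_eq_scaled_varpi
    using a L2norm_varpi_pos[OF n] lipschitz_varpi[OF n]
    by (intro lipschitz_on_cmult_real_nonneg) auto
  show "\<bar>omega a n x\<bar> \<le> omega a n 0" for x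
    using omega_nonneg[of x] omega_le_indicator[of x] omega_0_pos
    by (cases "x \<in> {-1..1}") simp_all
  show "omega a n x = 0" if "1 < \<bar>x\<bar>" for x
    using that by (simp add: omega_eq_scaled_varpi varpi_eq_0[OF n])
  show "omega a n 0 \<le> \<bar>omega a n y\<bar>" if "y \<in> {-(1 / (2 * real n))..1 / (2 * real n)}" for y
    using omega_peak_le[OF that] by simp
  show "-(1 / (2 * real n)) < 1 / (2 * real n)" using n by simp
qed (rule omega_0_pos)

end

theorem lemma4p5:
  fixes f :: "real \<Rightarrow> real" and \<mu> a :: real and n :: nat
  assumes mu: "0 < \<mu>" "\<mu> < 1"
    and a: "0 < a"
    and f_cont: "continuous_on UNIV f"
    and f1: "\<exists>\<kappa>>2 - \<mu>. ((\<lambda>t. \<bar>f t\<bar> / \<bar>t\<bar> powr \<kappa>) \<longlongrightarrow> 0) (at 0)"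
    and f2a: "\<And>\<alpha>. \<alpha> > pi \<Longrightarrow> ((\<lambda>t. \<bar>f t\<bar> * exp (- \<alpha> * t^2)) \<longlongrightarrow> 0) at_infinity"
    and f2b: "\<And>\<alpha>. 0 < \<alpha> \<Longrightarrow> \<alpha> < pi \<Longrightarrow>
                filterlim (\<lambda>t. \<bar>f t\<bar> * exp (- \<alpha> * t^2)) at_top at_infinity"
    and f3: "\<exists>\<theta>>3 - \<mu>. \<forall>t. t \<noteq> 0 \<longrightarrow> 0 < \<theta> * prim f t \<and> \<theta> * prim f t \<le> t * f t"
    and n: "n \<ge> 2"
  shows "\<exists>t\<^sub>n>0. Phi f \<mu> a n t\<^sub>n > 0 \<and> (\<forall>t\<ge>0. Phi f \<mu> a n t \<le> Phi f \<mu> a n t\<^sub>n)"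
proof -
  obtain \<kappa> where \<kappa>: "2 - \<mu> < \<kappa>" "((\<lambda>t. \<bar>f t\<bar> / \<bar>t\<bar> powr \<kappa>) \<longlongrightarrow> 0) (at 0)"
    using f1 by blast
  obtain \<theta> where \<theta>: "3 - \<mu> < \<theta>" "\<And>t. t \<noteq> 0 \<Longrightarrow> 0 < \<theta> * prim f t \<and> \<theta> * prim f t \<le> t * f t"
    using f3 by blast
  interpret choquard_profile f \<theta> \<mu> "omega a n" "omega a n 0" "{-1..1}"
    using mu f_cont \<theta> omega_nonneg[OF a n] omega_le_indicator[OF a n] omega_0_pos[OF a n]
    by unfold_locales auto
  have "\<forall>\<^sub>F t in at_right 0. 0 < t \<and> 0 < fibering f \<mu> (omega a n) t"
    using eventually_at_right_less eventually_fibering_pos_at_0[OF \<kappa> frac_seminorm_sq_omega_pos[OF a n]]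
    by (rule eventually_conj)
  from eventually_happens'[OF trivial_limit_at_right_real this]
  obtain t\<^sub>1 where "0 < t\<^sub>1" "0 < fibering f \<mu> (omega a n) t\<^sub>1"
    by blast
  have "\<forall>\<^sub>F t in at_top. fibering f \<mu> (omega a n) t < 0"
    using n omega_0_pos[OF a n] omega_peak_le[OF a n]
    by (intro eventually_fibering_neg_at_top[OF \<theta>(1),
          of "-(1 / (2 * real n))" "1 / (2 * real n)" "omega a n 0"]) auto
  then have "\<forall>\<^sub>F t in at_top. fibering f \<mu> (omega a n) t \<le> fibering f \<mu> (omega a n) 0"
    by (simp add: eventually_mono)
  with \<open>0 < fibering f \<mu> (omega a n) t\<^sub>1\<close> obtain s where "0 < s" "0 < fibering f \<mu> (omega a n) s"
    "\<forall>t\<ge>0. fibering f \<mu> (omega a n) t \<le> fibering f \<mu> (omega a n) s"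
    using continuous_on_atLeast_attains_max[OF continuous_on_fibering[OF \<kappa>] less_imp_le[OF \<open>0 < t\<^sub>1\<close>]]
    by auto
  then show ?thesis by (auto simp: Phi_eq_fibering)
qed

end
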